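(* Let $0\le a\le b\le n$ be integers with $a+b\le n$, and let $\varepsilon(a,b)$ be defined by $\mathbb E_{\mu_{ab}}[X]=\frac{a+b}{2}+\varepsilon(a,b)$, where $X$ has law $\mu_{ab}$. Then $\varepsilon(a,b)\ge0$. Moreover, $\varepsilon(a,b)\le\varepsilon(c,d)$ for any pair of integers $c,d$ with $c\le\min\{a,d\}\le\max\{a,d\}\le b$.
   Context: Fix $\beta>0$ and integer $n\ge1$. For integers $0\le a\le b\le n$, $\mu_{ab}$ is the probability distribution on $\{0,1,\dots,n\}$ given by $\mu_{ab}(j)=e^{-\beta(b-a)-2\beta(a-j)}/Z$ for $0\le j<a$, $\mu_{ab}(j)=e^{-\beta(b-a)}/Z$ for $a\le j\le b$, and $\mu_{ab}(j)=e^{-\beta(b-a)-2\beta(j-b)}/Z$ for $b<j\le n$, with $Z$ a normalizing constant. (This is the conditional law of the height at a site of the SOS model given that its two neighbouring heights have minimum $a$ and maximum $b$; i.e., the law of the new height after a column update.) For $c\le d$, $\varepsilon(c,d)$ is defined in the same way, $\varepsilon(c,d)=\mathbb E_{\mu_{cd}}[X]-\frac{c+d}2$. *)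

theory Defs
  imports Complex_Main
begin

definition sos_weight :: "real \<Rightarrow> int \<Rightarrow> int \<Rightarrow> int \<Rightarrow> real" where
  "sos_weight \<beta> a b j =
     (if j < a then exp (- \<beta> * of_int (b - a) - 2 * \<beta> * of_int (a - j))
      else if j \<le> b then exp (- \<beta> * of_int (b - a))
      else exp (- \<beta> * of_int (b - a) - 2 * \<beta> * of_int (j - b)))"

definition sos_Z :: "real \<Rightarrow> nat \<Rightarrow> int \<Rightarrow> int \<Rightarrow> real" where
  "sos_Z \<beta> n a b = (\<Sum>j\<in>{0..int n}. sos_weight \<beta> a b j)"

definition sos_mu :: "real \<Rightarrow> nat \<Rightarrow> int \<Rightarrow> int \<Rightarrow> int \<Rightarrow> real" where
  "sos_mu \<beta> n a b j = sos_weight \<beta> a b j / sos_Z \<beta> n a b"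

definition sos_mean :: "real \<Rightarrow> nat \<Rightarrow> int \<Rightarrow> int \<Rightarrow> real" where
  "sos_mean \<beta> n a b = (\<Sum>j\<in>{0..int n}. of_int j * sos_mu \<beta> n a b j)"

definition sos_eps :: "real \<Rightarrow> nat \<Rightarrow> int \<Rightarrow> int \<Rightarrow> real" where
  "sos_eps \<beta> n a b = sos_mean \<beta> n a b - of_int (a + b) / 2"

end

theory Submission
  imports Defs
begin

text \<open>Put \<open>q = exp (-2\<beta>)\<close>. Measured from the centre \<open>(a + b) / 2\<close> the plateau heights cancel, so
  \<open>\<epsilon>(a, b)\<close> is a ratio of geometric tail sums: the \<open>a\<close> heights below the plateau pull the mean
  down, the \<open>n - b \<ge> a\<close> heights above pull it up, whence \<open>\<epsilon>(a, b) \<ge> 0\<close>. The comparison reduces to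
  the unit moves \<open>b \<mapsto> b - 1\<close> and \<open>a \<mapsto> a - 1\<close>. After cross-multiplication each move changes the
  ratio by an explicit combination of tail sums, whose sign comes from the monotonicity of the tail
  excess \<open>W - G (G + 1) / 2\<close>, where \<open>G\<close> and \<open>W\<close> are the mass and first moment of the weights
  \<open>q, q\<^sup>2, q\<^sup>3, \<dots>\<close>, and, for lowering \<open>a\<close>, from a bound on the increments of the excess.\<close>

definition tail_mass :: "real \<Rightarrow> nat \<Rightarrow> real" where
  "tail_mass q m = (\<Sum>i<m. q ^ (i + 1))"

definition tail_moment :: "real \<Rightarrow> nat \<Rightarrow> real" where
  "tail_moment q m = (\<Sum>i<m. real (i + 1) * q ^ (i + 1))"

definition tail_excess :: "real \<Rightarrow> nat \<Rightarrow> real" where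
  "tail_excess q m = tail_moment q m - tail_mass q m * (tail_mass q m + 1) / 2"

lemma tail_mass_0 [simp]: "tail_mass q 0 = 0"
  by (simp add: tail_mass_def)

lemma tail_mass_Suc: "tail_mass q (Suc m) = tail_mass q m + q ^ (m + 1)"
  by (simp add: tail_mass_def)

lemma tail_moment_0 [simp]: "tail_moment q 0 = 0"
  by (simp add: tail_moment_def)

lemma tail_moment_Suc: "tail_moment q (Suc m) = tail_moment q m + real (m + 1) * q ^ (m + 1)"
  by (simp add: tail_moment_def)

lemma tail_mass_add: "tail_mass q (k + m) = tail_mass q k + q ^ k * tail_mass q m"
  by (induct m) (simp_all add: tail_mass_Suc algebra_simps power_add)

lemma tail_moment_add:
  "tail_moment q (k + m) = tail_moment q k + q ^ k * (real k * tail_mass q m + tail_moment q m)"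
  by (induct m) (simp_all add: tail_mass_Suc tail_moment_Suc algebra_simps power_add)

lemma tail_mass_nonneg: "0 \<le> q \<Longrightarrow> 0 \<le> tail_mass q m"
  by (simp add: tail_mass_def sum_nonneg)

lemma tail_moment_nonneg: "0 \<le> q \<Longrightarrow> 0 \<le> tail_moment q m"
  by (simp add: tail_moment_def sum_nonneg)

lemma tail_mass_le:
  assumes "0 \<le> q" "q \<le> 1"
  shows "tail_mass q m \<le> real m"
proof (induct m)
  case (Suc m)
  then show ?case
    using power_le_one[OF assms, of "m + 1"] by (simp add: tail_mass_Suc del: power_Suc)
qed simp

lemma tail_mass_mono: "0 \<le> q \<Longrightarrow> k \<le> m \<Longrightarrow> tail_mass q k \<le> tail_mass q m"
  using tail_mass_add[of q k "m - k"] tail_mass_nonneg[of q "m - k"] by simp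

lemma tail_moment_mono: "0 \<le> q \<Longrightarrow> k \<le> m \<Longrightarrow> tail_moment q k \<le> tail_moment q m"
  using tail_moment_add[of q k "m - k"] tail_mass_nonneg[of q "m - k"] tail_moment_nonneg[of q "m - k"]
  by simp

lemma one_minus_mult_tail_mass: "(1 - q) * tail_mass q m = q - q ^ (m + 1)"
proof -
  have "tail_mass q m = q * (\<Sum>i<m. q ^ i)"
    by (simp add: tail_mass_def sum_distrib_left)
  then have "(1 - q) * tail_mass q m = q * (1 - q ^ m)"
    by (simp only: one_diff_power_eq mult.left_commute)
  then show ?thesis
    by (simp add: algebra_simps)
qed

lemma one_minus_mult_tail_moment: "(1 - q) * tail_moment q m = tail_mass q m - real m * q ^ (m + 1)"
  by (induct m) (simp_all add: tail_mass_Suc tail_moment_Suc algebra_simps)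

lemma one_minus_power_eq: "1 - q ^ k = (1 - q) * (1 + tail_mass q k - q ^ k)"
  using one_minus_mult_tail_mass[of q k] by (simp add: algebra_simps)

lemma tail_excess_Suc_ge:
  assumes "0 \<le> q" "q \<le> 1"
  shows "tail_excess q m \<le> tail_excess q (Suc m)"
proof -
  define y where "y = q ^ (m + 1)"
  have y: "0 \<le> y" "y \<le> 1"
    using assms by (simp_all add: y_def power_le_one del: power_Suc)
  have "tail_excess q (Suc m) - tail_excess q m = y * (real m + 1 - tail_mass q m - (y + 1) / 2)"
    by (simp add: tail_excess_def tail_mass_Suc tail_moment_Suc y_def algebra_simps
        add_divide_distrib diff_divide_distrib)
  moreover have "0 \<le> y * (real m + 1 - tail_mass q m - (y + 1) / 2)"
    using y tail_mass_le[OF assms, of m] by simp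
  ultimately show ?thesis
    by linarith
qed

lemma tail_excess_mono:
  assumes "0 \<le> q" "q \<le> 1" "k \<le> m"
  shows "tail_excess q k \<le> tail_excess q m"
  using lift_Suc_mono_le[of "tail_excess q"] tail_excess_Suc_ge[OF assms(1,2)] assms(3) by blast

lemma tail_excess_increment_core:
  fixes z g h r k :: real
  assumes "0 \<le> z" "0 \<le> g" "0 \<le> h" "0 \<le> k"
    and "(1 - z) * r \<le> (1 + g - z) * h" and "(1 - z) * h \<le> 1 + g - z"
  shows "(1 - z) * (2*k*h + 2*r - h*(2*g + 1) - z*h\<^sup>2) \<le> (1 + 2*g + z*h) * (2*k + 1 + z*h)"
proof -
  have "(1 + 2*g + z*h) * (2*k + 1 + z*h) - (1 - z) * (2*k*h + 2*r - h*(2*g + 1) - z*h\<^sup>2)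
      = 2 * ((1 + g - z)*h - (1 - z)*r) + (2*k + 1) * ((1 + g) - (1 - z)*h) + (2*k + 1) * g
        + z*h*(2*k + 2) + z*h\<^sup>2"
    by (simp add: algebra_simps power2_eq_square)
  moreover have "0 \<le> (2*k + 1) * ((1 + g) - (1 - z)*h)"
    using assms by simp
  ultimately show ?thesis
    using assms by (smt (verit) mult_nonneg_nonneg zero_le_power2)
qed

lemma tail_excess_increment_bound:
  assumes q: "0 < q" "q < 1" and "k \<le> m"
  shows "(1 - q ^ k) * (tail_excess q m - tail_excess q k)
         \<le> q ^ k * (1 + tail_mass q k + tail_mass q m) * (2 * real k + 1 + tail_mass q m - tail_mass q k) / 2"
proof -
  obtain d where m: "m = k + d"
    using \<open>k \<le> m\<close> le_Suc_ex by blast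
  define z g h r where "z = q ^ k" and "g = tail_mass q k"
    and "h = tail_mass q d" and "r = tail_moment q d"
  have mass_m: "tail_mass q m = g + z * h"
    unfolding m tail_mass_add g_def z_def h_def ..
  have moment_m: "tail_moment q m = tail_moment q k + z * (real k * h + r)"
    unfolding m tail_moment_add z_def h_def r_def ..
  have excess: "tail_excess q m - tail_excess q k = z * (2*real k*h + 2*r - h*(2*g + 1) - z*h\<^sup>2) / 2"
    unfolding tail_excess_def mass_m moment_m g_def[symmetric]
    by (simp add: algebra_simps divide_simps power2_eq_square)
  have geometric: "1 - z = (1 + g - z) * (1 - q)"
    using one_minus_power_eq[of q k] by (simp add: z_def g_def)
  have "0 \<le> 1 + g - z"
    using q tail_mass_nonneg[of q k] power_le_one[of q k] by (simp add: z_def g_def)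
  have "0 \<le> q ^ (d + 1)"
    using q by simp
  then have "(1 - q) * h \<le> 1"
    using one_minus_mult_tail_mass[of q d] q unfolding h_def by linarith
  with \<open>0 \<le> 1 + g - z\<close> have mass_bound: "(1 - z) * h \<le> 1 + g - z"
    unfolding geometric mult.assoc using mult_left_mono[of _ 1] by fastforce
  have "(1 - q) * r \<le> h"
    using one_minus_mult_tail_moment[of q d] q by (simp add: r_def h_def)
  with \<open>0 \<le> 1 + g - z\<close> have moment_bound: "(1 - z) * r \<le> (1 + g - z) * h"
    unfolding geometric mult.assoc by (simp add: mult_left_mono)
  have "(1 - z) * (2*real k*h + 2*r - h*(2*g + 1) - z*h\<^sup>2) \<le> (1 + 2*g + z*h) * (2*real k + 1 + z*h)"
    using q mass_bound moment_bound
    by (intro tail_excess_increment_core) (simp_all add: z_def g_def h_def tail_mass_nonneg)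
  from mult_left_mono[OF this, of z]
  show ?thesis
    using q by (simp add: excess mass_m z_def g_def algebra_simps divide_simps)
qed

text \<open>\<open>\<epsilon>(a, b) = eps_ratio (exp (-2\<beta>)) L A B\<close> with \<open>L = (b - a) / 2\<close> the half-width of the plateau
  and \<open>A = a\<close>, \<open>B = n - b\<close> the numbers of heights below and above it.\<close>

definition eps_num :: "real \<Rightarrow> real \<Rightarrow> nat \<Rightarrow> nat \<Rightarrow> real" where
  "eps_num q L A B = L * (tail_mass q B - tail_mass q A) + tail_moment q B - tail_moment q A"

definition eps_den :: "real \<Rightarrow> real \<Rightarrow> nat \<Rightarrow> nat \<Rightarrow> real" where
  "eps_den q L A B = 2 * L + 1 + tail_mass q A + tail_mass q B"

definition eps_ratio :: "real \<Rightarrow> real \<Rightarrow> nat \<Rightarrow> nat \<Rightarrow> real" where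
  "eps_ratio q L A B = eps_num q L A B / eps_den q L A B"

lemma eps_den_pos: "0 \<le> q \<Longrightarrow> 0 \<le> L \<Longrightarrow> 0 < eps_den q L A B"
  using tail_mass_nonneg[of q A] tail_mass_nonneg[of q B] by (simp add: eps_den_def)

lemma eps_num_nonneg:
  assumes "0 \<le> q" "0 \<le> L" "A \<le> B"
  shows "0 \<le> eps_num q L A B"
proof -
  have "0 \<le> L * (tail_mass q B - tail_mass q A)"
    using assms tail_mass_mono[of q A B] by simp
  then show ?thesis
    using assms tail_moment_mono[of q A B] by (simp add: eps_num_def)
qed

lemma eps_ratio_nonneg: "0 \<le> q \<Longrightarrow> 0 \<le> L \<Longrightarrow> A \<le> B \<Longrightarrow> 0 \<le> eps_ratio q L A B"
  by (simp add: eps_ratio_def eps_num_nonneg eps_den_pos less_imp_le)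

lemma eps_ratio_le_shift_above:
  assumes q: "0 < q" "q < 1" and "A \<le> B" "1 / 2 \<le> L"
  shows "eps_ratio q L A B \<le> eps_ratio q (L - 1 / 2) A (Suc B)"
proof -
  have den: "0 < eps_den q L A B" "0 < eps_den q (L - 1 / 2) A (Suc B)"
    using q assms by (simp_all add: eps_den_pos)
  have cross: "eps_num q (L - 1 / 2) A (Suc B) * eps_den q L A B - eps_num q L A B * eps_den q (L - 1 / 2) A (Suc B)
      = (1 - q ^ (B + 1)) * (tail_excess q B - tail_excess q A)
        + q ^ (B + 1) * eps_den q L A B * (L + real B + 1 / 2 - (tail_mass q B - tail_mass q A) / 2)"
    by (simp add: eps_num_def eps_den_def tail_excess_def tail_mass_Suc tail_moment_Suc
        algebra_simps divide_simps)
  have "0 \<le> (1 - q ^ (B + 1)) * (tail_excess q B - tail_excess q A)"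
    using q tail_excess_mono[of q A B] \<open>A \<le> B\<close> by (simp add: power_le_one del: power_Suc)
  moreover have "0 \<le> q ^ (B + 1) * eps_den q L A B * (L + real B + 1 / 2 - (tail_mass q B - tail_mass q A) / 2)"
    using q den \<open>1 / 2 \<le> L\<close> tail_mass_le[of q B] tail_mass_nonneg[of q A] by simp
  ultimately show ?thesis
    using den cross by (simp add: eps_ratio_def divide_simps)
qed

lemma eps_ratio_le_shift_below:
  assumes q: "0 < q" "q < 1" and "Suc A \<le> B" "0 \<le> L"
  shows "eps_ratio q L (Suc A) B \<le> eps_ratio q (L + 1 / 2) A B"
proof -
  define M where "M = (tail_mass q B - tail_mass q (Suc A)) / 2 + L + real A + 3 / 2"
  have den: "0 < eps_den q L (Suc A) B" "0 < eps_den q (L + 1 / 2) A B"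
    using q assms by (simp_all add: eps_den_pos)
  have cross: "eps_num q (L + 1 / 2) A B * eps_den q L (Suc A) B - eps_num q L (Suc A) B * eps_den q (L + 1 / 2) A B
      = q ^ (A + 1) * eps_den q L (Suc A) B * M - (1 - q ^ (A + 1)) * (tail_excess q B - tail_excess q (Suc A))"
    by (simp add: M_def eps_num_def eps_den_def tail_excess_def tail_mass_Suc tail_moment_Suc
        algebra_simps divide_simps)
  have "(1 - q ^ Suc A) * (tail_excess q B - tail_excess q (Suc A))
      \<le> q ^ Suc A * (1 + tail_mass q (Suc A) + tail_mass q B)
          * (2 * real (Suc A) + 1 + tail_mass q B - tail_mass q (Suc A)) / 2"
    using tail_excess_increment_bound[OF q \<open>Suc A \<le> B\<close>] .
  also have "\<dots> = q ^ (A + 1) * ((1 + tail_mass q (Suc A) + tail_mass q B)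
      * ((2 * real (Suc A) + 1 + tail_mass q B - tail_mass q (Suc A)) / 2))"
    by simp
  also have "\<dots> \<le> q ^ (A + 1) * (eps_den q L (Suc A) B * M)"
    using q \<open>0 \<le> L\<close> tail_mass_mono[OF _ \<open>Suc A \<le> B\<close>, of q] tail_mass_nonneg[of q "Suc A"]
    by (intro mult_left_mono mult_mono) (simp_all add: eps_den_def M_def field_simps)
  finally show ?thesis
    using den cross by (simp add: eps_ratio_def divide_simps mult.assoc)
qed

definition column_weight :: "real \<Rightarrow> nat \<Rightarrow> nat \<Rightarrow> nat \<Rightarrow> real" where
  "column_weight q a b k = (if k < a then q ^ (a - k) else if k \<le> b then 1 else q ^ (k - b))"

lemma sos_weight_eq_column_weight:
  assumes "a \<le> b"
  shows "sos_weight \<beta> (int a) (int b) (int k) = exp (- \<beta> * real (b - a)) * column_weight (exp (-2 * \<beta>)) a b k"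
  using assms unfolding sos_weight_def column_weight_def
  by (auto simp: exp_of_nat_mult[symmetric] exp_add[symmetric] of_nat_diff algebra_simps)

lemma sum_atLeastAtMost_int_nat: "(\<Sum>j\<in>{0..int n}. f j) = (\<Sum>k=0..n. f (int k))"
proof -
  have "{0..int n} = int ` {0..n}"
    by (simp add: image_int_atLeastAtMost)
  then show ?thesis
    by (simp add: sum.reindex)
qed

lemma sum_column_weight_split:
  assumes "a \<le> b" "b \<le> n"
  shows "(\<Sum>k=0..n. f k * column_weight q a b k) =
    (\<Sum>i<a. f (a - Suc i) * q ^ (i + 1)) + (\<Sum>i=0..b - a. f (a + i)) + (\<Sum>i<n - b. f (Suc b + i) * q ^ (i + 1))"
proof -
  let ?g = "\<lambda>k. f k * column_weight q a b k"
  have "(\<Sum>k=0..n. ?g k) = sum ?g {0..<Suc b} + sum ?g {Suc b..<Suc n}"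
    unfolding atLeastLessThanSuc_atLeastAtMost[symmetric]
    by (rule sum.atLeastLessThan_concat[symmetric]) (use assms in auto)
  also have "sum ?g {0..<Suc b} = sum ?g {0..<a} + sum ?g {a..<Suc b}"
    by (rule sum.atLeastLessThan_concat[symmetric]) (use assms in auto)
  also have "sum ?g {0..<a} = (\<Sum>i<a. ?g (a - Suc i))"
    unfolding atLeast0LessThan by (rule sum.nat_diff_reindex[symmetric])
  also have "\<dots> = (\<Sum>i<a. f (a - Suc i) * q ^ (i + 1))"
    by (rule sum.cong) (auto simp: column_weight_def Suc_diff_Suc)
  also have "sum ?g {a..<Suc b} = sum ?g {0 + a..(b - a) + a}"
    using assms by (simp add: atLeastLessThanSuc_atLeastAtMost)
  also have "\<dots> = (\<Sum>i=0..b - a. f (a + i))"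
    unfolding sum.shift_bounds_cl_nat_ivl
    by (rule sum.cong) (use assms in \<open>auto simp: column_weight_def add.commute\<close>)
  also have "sum ?g {Suc b..<Suc n} = sum ?g {0 + Suc b..<(n - b) + Suc b}"
    using assms by simp
  also have "\<dots> = (\<Sum>i<n - b. f (Suc b + i) * q ^ (i + 1))"
    unfolding sum.shift_bounds_nat_ivl atLeast0LessThan
    by (rule sum.cong) (use assms in \<open>auto simp: column_weight_def add.commute\<close>)
  finally show ?thesis .
qed

lemma sum_column_weight:
  assumes "a \<le> b" "b \<le> n"
  shows "(\<Sum>k=0..n. column_weight q a b k) = eps_den q ((real b - real a) / 2) a (n - b)"
  using sum_column_weight_split[OF assms, of "\<lambda>_. 1" q] assms
  by (simp add: eps_den_def tail_mass_def of_nat_diff)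

lemma sum_centred_column_weight:
  assumes "a \<le> b" "b \<le> n"
  shows "(\<Sum>k=0..n. (real k - real (a + b) / 2) * column_weight q a b k) = eps_num q ((real b - real a) / 2) a (n - b)"
proof -
  define L where "L = (real b - real a) / 2"
  have "(\<Sum>i<a. (real (a - Suc i) - real (a + b) / 2) * q ^ (i + 1))
      = (\<Sum>i<a. - L * q ^ (i + 1) - real (i + 1) * q ^ (i + 1))"
    by (rule sum.cong) (auto simp: L_def of_nat_diff field_simps)
  then have below: "(\<Sum>i<a. (real (a - Suc i) - real (a + b) / 2) * q ^ (i + 1))
      = - L * tail_mass q a - tail_moment q a"
    by (simp add: tail_mass_def tail_moment_def sum_subtractf sum_distrib_left del: power_Suc of_nat_Suc)
  have "(\<Sum>i=0..b - a. real (a + i) - real (a + b) / 2) = (\<Sum>i=0..b - a. - real (b - a) / 2 + real i * 1)"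
    by (rule sum.cong) (use assms in \<open>auto simp: of_nat_diff field_simps\<close>)
  also have "\<dots> = 0"
    using double_arith_series[of "- real (b - a) / 2" 1 "b - a"] by simp
  finally have plateau: "(\<Sum>i=0..b - a. real (a + i) - real (a + b) / 2) = 0" .
  have "(\<Sum>i<n - b. (real (Suc b + i) - real (a + b) / 2) * q ^ (i + 1))
      = (\<Sum>i<n - b. L * q ^ (i + 1) + real (i + 1) * q ^ (i + 1))"
    by (rule sum.cong) (auto simp: L_def field_simps)
  then have above: "(\<Sum>i<n - b. (real (Suc b + i) - real (a + b) / 2) * q ^ (i + 1))
      = L * tail_mass q (n - b) + tail_moment q (n - b)"
    by (simp add: tail_mass_def tail_moment_def sum.distrib sum_distrib_left del: power_Suc of_nat_Suc)
  show ?thesis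
    unfolding sum_column_weight_split[OF assms] below plateau above eps_num_def L_def
    by (simp add: field_simps)
qed

lemma sos_eps_eq_eps_ratio:
  assumes "a \<le> b" "b \<le> n"
  shows "sos_eps \<beta> n (int a) (int b) = eps_ratio (exp (-2 * \<beta>)) ((real b - real a) / 2) a (n - b)"
proof -
  define q C m L where "q = exp (-2 * \<beta>)" and "C = exp (- \<beta> * real (b - a))"
    and "m = real (a + b) / 2" and "L = (real b - real a) / 2"
  let ?w = "sos_weight \<beta> (int a) (int b)"
  have weight: "?w (int k) = C * column_weight q a b k" for k
    using sos_weight_eq_column_weight[OF assms(1)] by (simp add: q_def C_def)
  have Z: "sos_Z \<beta> n (int a) (int b) = C * eps_den q L a (n - b)"
    using sum_column_weight[OF assms, of q]
    by (simp add: sos_Z_def sum_atLeastAtMost_int_nat weight L_def flip: sum_distrib_left)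
  have "0 < sos_Z \<beta> n (int a) (int b)"
    using assms by (simp add: Z C_def q_def L_def eps_den_pos)
  have "sos_mean \<beta> n (int a) (int b) = (\<Sum>j\<in>{0..int n}. of_int j * ?w j) / sos_Z \<beta> n (int a) (int b)"
    by (simp add: sos_mean_def sos_mu_def sum_divide_distrib)
  then have "sos_eps \<beta> n (int a) (int b)
      = ((\<Sum>j\<in>{0..int n}. of_int j * ?w j) - m * sos_Z \<beta> n (int a) (int b)) / sos_Z \<beta> n (int a) (int b)"
    using \<open>0 < sos_Z \<beta> n (int a) (int b)\<close> by (simp add: sos_eps_def m_def diff_divide_distrib)
  also have "(\<Sum>j\<in>{0..int n}. of_int j * ?w j) - m * sos_Z \<beta> n (int a) (int b)
      = (\<Sum>j\<in>{0..int n}. (of_int j - m) * ?w j)"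
    by (simp add: sos_Z_def sum_subtractf sum_distrib_left left_diff_distrib)
  also have "(\<Sum>j\<in>{0..int n}. (of_int j - m) * ?w j) = C * eps_num q L a (n - b)"
    using sum_centred_column_weight[OF assms, of q]
    by (simp add: sum_atLeastAtMost_int_nat weight m_def L_def mult.left_commute flip: sum_distrib_left)
  finally show ?thesis
    by (simp add: Z eps_ratio_def q_def L_def C_def)
qed

lemma sos_eps_nonneg_nat:
  assumes "a \<le> b" "a + b \<le> n"
  shows "0 \<le> sos_eps \<beta> n (int a) (int b)"
  using assms by (simp add: sos_eps_eq_eps_ratio eps_ratio_nonneg)

lemma sos_eps_Suc_upper_le:
  assumes "0 < \<beta>" "a \<le> b" "a + Suc b \<le> n"
  shows "sos_eps \<beta> n (int a) (int (Suc b)) \<le> sos_eps \<beta> n (int a) (int b)"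
proof -
  define q L where "q = exp (-2 * \<beta>)" and "L = (real (Suc b) - real a) / 2"
  have shift: "(real b - real a) / 2 = L - 1 / 2" "n - b = Suc (n - Suc b)"
    using assms by (auto simp: L_def field_simps)
  have "sos_eps \<beta> n (int a) (int (Suc b)) = eps_ratio q L a (n - Suc b)"
    unfolding q_def L_def by (rule sos_eps_eq_eps_ratio) (use assms in auto)
  also have "\<dots> \<le> eps_ratio q (L - 1 / 2) a (Suc (n - Suc b))"
    using assms by (intro eps_ratio_le_shift_above) (auto simp: q_def L_def)
  also have "\<dots> = sos_eps \<beta> n (int a) (int b)"
    unfolding q_def shift[symmetric] by (rule sos_eps_eq_eps_ratio[symmetric]) (use assms in auto)
  finally show ?thesis .
qed

lemma sos_eps_Suc_lower_le:
  assumes "0 < \<beta>" "Suc a \<le> b" "Suc a + b \<le> n"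
  shows "sos_eps \<beta> n (int (Suc a)) (int b) \<le> sos_eps \<beta> n (int a) (int b)"
proof -
  define q L where "q = exp (-2 * \<beta>)" and "L = (real b - real (Suc a)) / 2"
  have shift: "(real b - real a) / 2 = L + 1 / 2"
    by (simp add: L_def field_simps)
  have "sos_eps \<beta> n (int (Suc a)) (int b) = eps_ratio q L (Suc a) (n - b)"
    unfolding q_def L_def by (rule sos_eps_eq_eps_ratio) (use assms in auto)
  also have "\<dots> \<le> eps_ratio q (L + 1 / 2) a (n - b)"
    using assms by (intro eps_ratio_le_shift_below) (auto simp: q_def L_def)
  also have "\<dots> = sos_eps \<beta> n (int a) (int b)"
    unfolding q_def shift[symmetric] by (rule sos_eps_eq_eps_ratio[symmetric]) (use assms in auto)
  finally show ?thesis .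
qed

lemma sos_eps_antimono_upper:
  assumes "0 < \<beta>" "a \<le> d" "d \<le> b" "a + b \<le> n"
  shows "sos_eps \<beta> n (int a) (int b) \<le> sos_eps \<beta> n (int a) (int d)"
  using \<open>d \<le> b\<close> \<open>a + b \<le> n\<close>
proof (induct b rule: dec_induct)
  case (step m)
  then show ?case
    using sos_eps_Suc_upper_le[of \<beta> a m n] assms by simp
qed simp

lemma sos_eps_antimono_lower:
  assumes "0 < \<beta>" "c \<le> a" "a \<le> b" "a + b \<le> n"
  shows "sos_eps \<beta> n (int a) (int b) \<le> sos_eps \<beta> n (int c) (int b)"
  using \<open>c \<le> a\<close> \<open>a \<le> b\<close> \<open>a + b \<le> n\<close>
proof (induct a rule: dec_induct)
  case (step m)
  then show ?case
    using sos_eps_Suc_lower_le[of \<beta> m b n] assms by simp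
qed simp

lemma sos_eps_antimono:
  assumes "0 < \<beta>" "c \<le> a" "c \<le> d" "a \<le> b" "d \<le> b" "a + b \<le> n"
  shows "sos_eps \<beta> n (int a) (int b) \<le> sos_eps \<beta> n (int c) (int d)"
proof (cases "a \<le> d")
  case True
  then show ?thesis
    using assms sos_eps_antimono_upper[of \<beta> a d b n] sos_eps_antimono_lower[of \<beta> c a d n] by simp
next
  case False
  then show ?thesis
    using assms sos_eps_antimono_lower[of \<beta> c a b n] sos_eps_antimono_upper[of \<beta> c d b n] by simp
qed

theorem lemma3p2:
  fixes \<beta> :: real and n :: nat and a b :: int
  assumes "\<beta> > 0" and "n \<ge> 1"
    and "0 \<le> a" and "a \<le> b" and "b \<le> int n" and "a + b \<le> int n"
  shows "sos_eps \<beta> n a b \<ge> 0 \<and>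
         (\<forall>c d :: int. 0 \<le> c \<and> c \<le> min a d \<and> max a d \<le> b \<longrightarrow>
            sos_eps \<beta> n a b \<le> sos_eps \<beta> n c d)"
proof (intro conjI allI impI)
  obtain a' b' where ab: "a = int a'" "b = int b'"
    using assms by (metis nonneg_int_cases order_trans)
  show "sos_eps \<beta> n a b \<ge> 0"
    using assms sos_eps_nonneg_nat[of a' b' n \<beta>] by (simp add: ab)
  fix c d :: int
  assume cd: "0 \<le> c \<and> c \<le> min a d \<and> max a d \<le> b"
  then obtain c' d' where "c = int c'" "d = int d'"
    by (metis nonneg_int_cases min.bounded_iff order_trans)
  then show "sos_eps \<beta> n a b \<le> sos_eps \<beta> n c d"
    using assms cd sos_eps_antimono[of \<beta> c' a' d' b' n] by (simp add: ab)
qed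

end
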